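(* Let $n\ge2$, let $q\in\mathbb C$ with $0<|q|<1$ and fix an $n$-th root $q^{1/n}$. Let $A^*$ be the $(n-1)\times(n-1)$ matrix $A^*_{\alpha\beta}=n\delta_{\alpha\beta}-1$. For nonzero complex $\mu_1,\dots,\mu_{n-1}$ set $\mu_n:=q^{-1}(\mu_1\cdots\mu_{n-1})^{-1}$ and $$\Theta^{(1)}(\mu)=\sum_{\vec k\in\mathbb Z^{n-1}}q^{\frac1n\{(\vec k,A^*\vec k)+(\vec 1,\vec k)\}}\mu_1^{k_1}\cdots\mu_{n-1}^{k_{n-1}},$$ where $(\vec k,A^*\vec k)=\sum_{\alpha,\beta}k_\alpha A^*_{\alpha\beta}k_\beta$ and $(\vec1,\vec k)=\sum_\alpha k_\alpha$, and $q^{m/n}:=(q^{1/n})^m$. Then the series converges, and for every $\alpha=1,\dots,n$, $$q\mu_\alpha\,\Theta^{(1)}\bigl(\nabla^\alpha(\mu)\bigr)=\Theta^{(1)}(\mu),$$ where $\nabla^\alpha(\mu_\beta)=q^{2(\delta_{\alpha\beta}-1/n)}\mu_\beta$ for $\beta=1,\dots,n$ (this shift preserves $\prod_\beta\mu_\beta=q^{-1}$). With $q=e^{2\pi i\tau}$, $q^{1/n}\mu_\alpha=e^{2\pi iz_\alpha}$ and $\Omega_{\alpha\beta}=2\tau(\delta_{\alpha\beta}-\frac1n)$, one has $\Theta^{(1)}=\sum_{\vec k\in\mathbb Z^{n-1}}\exp\{\pi i(\vec k,\Omega\vec k)+2\pi i(\vec k,\vec z)\}$, a Riemann theta function.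
   Context: This function is the candidate evolution operator for the $q$-deformed isotropic top on the $SL_q(n)$ Heisenberg double, whose evolution equations are the displayed functional equations in the spectral variables $\mu_1,\dots,\mu_n$ subject to $\prod_{\alpha=1}^n\mu_\alpha=q^{-1}$. *)

theory Defs
  imports "HOL-Analysis.Analysis"
begin

definition lattice :: "nat \<Rightarrow> (nat \<Rightarrow> int) set" where
  "lattice n = PiE {1..n-1} (\<lambda>_. UNIV)"

definition Astar_form :: "nat \<Rightarrow> (nat \<Rightarrow> int) \<Rightarrow> int" where
  "Astar_form n k = (\<Sum>a\<in>{1..n-1}. \<Sum>b\<in>{1..n-1}.
      k a * ((if a = b then int n else 0) - 1) * k b)"

text \<open>Term of the theta series; \<open>r\<close> is the fixed n-th root of q, \<open>q^{m/n} = r^m\<close>.\<close>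
definition theta_term :: "nat \<Rightarrow> complex \<Rightarrow> (nat \<Rightarrow> complex) \<Rightarrow> (nat \<Rightarrow> int) \<Rightarrow> complex" where
  "theta_term n r \<mu> k = r powi (Astar_form n k + (\<Sum>a\<in>{1..n-1}. k a))
      * (\<Prod>a\<in>{1..n-1}. \<mu> a powi k a)"

definition Theta1 :: "nat \<Rightarrow> complex \<Rightarrow> (nat \<Rightarrow> complex) \<Rightarrow> complex" where
  "Theta1 n r \<mu> = infsum (theta_term n r \<mu>) (lattice n)"

definition mu_ext :: "nat \<Rightarrow> complex \<Rightarrow> (nat \<Rightarrow> complex) \<Rightarrow> nat \<Rightarrow> complex" where
  "mu_ext n q \<mu> b = (if b = n then inverse (q * (\<Prod>a\<in>{1..n-1}. \<mu> a)) else \<mu> b)"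

text \<open>Shift \<open>\<nabla>^\<alpha>(\<mu>_\<beta>) = q^{2(\<delta>_{\<alpha>\<beta>} - 1/n)} \<mu>_\<beta>\<close>, with \<open>q^{-2/n} = r^{-2}\<close>.\<close>
definition nabla :: "complex \<Rightarrow> complex \<Rightarrow> nat \<Rightarrow> (nat \<Rightarrow> complex) \<Rightarrow> nat \<Rightarrow> complex" where
  "nabla q r \<alpha> \<mu> b = (if b = \<alpha> then q^2 else 1) * r powi (-2) * \<mu> b"

end

theory Submission
  imports Defs
begin

text \<open>Since \<open>(k, A* k) \<ge> (k, k)\<close> and \<open>j\<^sup>2 + j \<ge> 0\<close> on the integers, the series is dominated by a
  product of one-dimensional theta series, hence converges absolutely. The form polarizes as
  \<open>(k + d, A* (k + d)) = (k, A* k) + 2 (k, A* d) + (d, A* d)\<close>, so translating the summation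
  variable by a lattice vector \<open>d\<close> multiplies \<open>\<Theta>\<close> by its term at \<open>d\<close> and rescales each \<open>\<mu>\<^sub>a\<close> by
  \<open>q^{2(d_a - (\<Sum>d)/n)}\<close>. A unit vector \<open>d = e\<^sub>\<alpha>\<close> yields the shift \<open>\<nabla>\<^sup>\<alpha>\<close> for \<open>\<alpha> < n\<close>,
  and \<open>d = -(1,\<dots>,1)\<close> yields \<open>\<nabla>\<^sup>n\<close>.\<close>

lemma prod_power_int_eq_power_int_sum:
  fixes x :: "'a :: field"
  assumes "x \<noteq> 0"
  shows "(\<Prod>a\<in>A. x powi f a) = x powi (\<Sum>a\<in>A. f a)"
  by (induction A rule: infinite_finite_induct) (auto simp: power_int_add assms)

lemma Astar_form_altdef:
  "Astar_form n k = int n * (\<Sum>a\<in>{1..n-1}. k a * k a) - (\<Sum>a\<in>{1..n-1}. k a) * (\<Sum>a\<in>{1..n-1}. k a)"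
proof -
  have "Astar_form n k = (\<Sum>a\<in>{1..n-1}. \<Sum>b\<in>{1..n-1}.
      (if a = b then int n * k a * k b else 0) - k a * k b)"
    unfolding Astar_form_def by (intro sum.cong refl) (auto simp: algebra_simps)
  also have "\<dots> = (\<Sum>a\<in>{1..n-1}. int n * k a * k a - k a * (\<Sum>b\<in>{1..n-1}. k b))"
    by (simp add: sum_subtractf sum_distrib_left sum.delta)
  also have "\<dots> = int n * (\<Sum>a\<in>{1..n-1}. k a * k a) - (\<Sum>a\<in>{1..n-1}. k a) * (\<Sum>a\<in>{1..n-1}. k a)"
    by (simp add: sum_subtractf mult.assoc flip: sum_distrib_left sum_distrib_right)
  finally show ?thesis .
qed

lemma square_sum_le_card_mult_sum_squares:
  fixes k :: "'a \<Rightarrow> 'b :: linordered_idom"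
  shows "(\<Sum>a\<in>A. k a) * (\<Sum>a\<in>A. k a) \<le> of_nat (card A) * (\<Sum>a\<in>A. k a * k a)"
proof (cases "finite A")
  case True
  have "0 \<le> (\<Sum>a\<in>A. \<Sum>b\<in>A. (k a - k b) * (k a - k b))"
    by (intro sum_nonneg) auto
  also have "\<dots> = (\<Sum>a\<in>A. \<Sum>b\<in>A. k a * k a + k b * k b - 2 * (k a * k b))"
    by (intro sum.cong refl) (simp add: algebra_simps)
  also have "\<dots> = 2 * (of_nat (card A) * (\<Sum>a\<in>A. k a * k a)) - 2 * ((\<Sum>a\<in>A. k a) * (\<Sum>a\<in>A. k a))"
    by (simp add: sum.distrib sum_subtractf sum_distrib_left sum_distrib_right algebra_simps)
  finally show ?thesis by simp
qed simp

lemma Astar_form_ge_sum_squares: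
  assumes "n \<ge> 1"
  shows "(\<Sum>a\<in>{1..n-1}. k a * k a) \<le> Astar_form n k"
  using square_sum_le_card_mult_sum_squares[of k "{1..n-1}"] assms
  by (simp add: Astar_form_altdef of_nat_diff algebra_simps)

lemma Astar_form_add:
  "Astar_form n (\<lambda>a. k a + d a) = Astar_form n k + Astar_form n d
     + 2 * (int n * (\<Sum>a\<in>{1..n-1}. k a * d a) - (\<Sum>a\<in>{1..n-1}. k a) * (\<Sum>a\<in>{1..n-1}. d a))"
  by (simp add: Astar_form_altdef sum.distrib sum_distrib_left algebra_simps)

lemma summable_power_square_mult_power:
  fixes s d :: real
  assumes "0 \<le> s" "s < 1" "0 \<le> d"
  shows "summable (\<lambda>m::nat. s^(m*m) * d^m)"
proof -
  have "(\<lambda>m. s^m * d) \<longlonglongrightarrow> 0 * d"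
    by (intro tendsto_intros LIMSEQ_power_zero) (use assms in auto)
  hence "eventually (\<lambda>m. s^m * d < 1/2) sequentially"
    by (intro order_tendstoD(2)) auto
  then obtain M where M: "s^M * d < 1/2" by (auto simp: eventually_sequentially)
  show ?thesis
  proof (rule summable_comparison_test')
    show "summable (\<lambda>m. (1/2::real)^m)" by (rule summable_geometric) auto
    fix m assume "m \<ge> M"
    have "s^(m*m) * d^m \<le> s^(M*m) * d^m"
      by (intro mult_right_mono power_decreasing) (use assms \<open>m \<ge> M\<close> in auto)
    also have "\<dots> = (s^M * d)^m" by (simp add: power_mult power_mult_distrib)
    also have "\<dots> \<le> (1/2)^m"
      by (intro power_mono) (use M assms in auto)
    finally show "norm (s^(m*m) * d^m) \<le> (1/2)^m"
      using assms by simp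
  qed
qed

lemma power_int_quadratic_summable_on:
  fixes s c :: real
  assumes "0 < s" "s < 1" "0 < c"
  shows "(\<lambda>j::int. s powi (j*j+j) * c powi j) summable_on UNIV"
proof -
  let ?g = "\<lambda>j::int. s powi (j*j+j) * c powi j"
  have "?g summable_on range int"
  proof -
    have "(\<lambda>m::nat. s^(m*m) * (s*c)^m) summable_on UNIV"
      using summable_power_square_mult_power[of s "s*c"] assms
      by (subst summable_on_UNIV_nonneg_real_iff) auto
    moreover have "?g \<circ> int = (\<lambda>m::nat. s^(m*m) * (s*c)^m)"
    proof
      fix m :: nat
      have "int m * int m + int m = int (m*m+m)" by simp
      then show "(?g \<circ> int) m = s^(m*m) * (s*c)^m"
        by (simp only: o_def power_int_of_nat) (simp add: power_add power_mult_distrib)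
    qed
    ultimately show ?thesis by (subst summable_on_reindex) auto
  qed
  moreover have "?g summable_on range (\<lambda>m. - int m - 1)"
  proof -
    have "(\<lambda>m::nat. s^(m*m) * (s/c)^m) summable_on UNIV"
      using summable_power_square_mult_power[of s "s/c"] assms
      by (subst summable_on_UNIV_nonneg_real_iff) auto
    hence "(\<lambda>m::nat. inverse c * (s^(m*m) * (s/c)^m)) summable_on UNIV"
      by (rule summable_on_cmult_right)
    moreover have "?g \<circ> (\<lambda>m. - int m - 1) = (\<lambda>m::nat. inverse c * (s^(m*m) * (s/c)^m))"
    proof
      fix m :: nat
      have "(- int m - 1) * (- int m - 1) + (- int m - 1) = int (m*m+m)"
        by (simp add: algebra_simps)
      moreover have "- int m - 1 = - int (Suc m)" by simp
      ultimately show "(?g \<circ> (\<lambda>m. - int m - 1)) m = inverse c * (s^(m*m) * (s/c)^m)"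
        using assms by (simp only: o_def power_int_of_nat power_int_minus)
          (simp add: power_add power_mult_distrib field_simps)
    qed
    moreover have "inj (\<lambda>m::nat. - int m - 1)" by (auto simp: inj_def)
    ultimately show ?thesis by (subst summable_on_reindex) auto
  qed
  ultimately have "?g summable_on (range int \<union> range (\<lambda>m. - int m - 1))"
    by (intro summable_on_Un_disjoint) auto
  moreover have "range int \<union> range (\<lambda>m. - int m - 1) = (UNIV :: int set)"
  proof -
    have "j \<in> range int \<union> range (\<lambda>m. - int m - 1)" for j :: int
      by (cases "j \<ge> 0") (auto intro: image_eqI[of _ _ "nat j"] image_eqI[of _ _ "nat (- j - 1)"])
    thus ?thesis by auto
  qed
  ultimately show ?thesis by simp
qed

lemma theta_term_summable_on:
  fixes r :: complex and \<mu> :: "nat \<Rightarrow> complex"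
  assumes "n \<ge> 1" "0 < norm r" "norm r < 1" "\<forall>a\<in>{1..n-1}. \<mu> a \<noteq> 0"
  shows "theta_term n r \<mu> summable_on lattice n"
proof -
  define s where "s = norm r"
  have s: "0 < s" "s < 1" using assms(2,3) by (auto simp: s_def)
  define G where "G a j = s powi (j*j+j) * norm (\<mu> a) powi j" for a :: nat and j :: int
  have G_nonneg: "0 \<le> G a j" for a j unfolding G_def using s by simp
  have "Infinite_Set_Sum.abs_summable_on (\<lambda>k. \<Prod>a\<in>{1..n-1}. G a (k a)) (lattice n)"
    unfolding lattice_def
  proof (intro abs_summable_on_prod_PiE)
    fix a :: nat assume "a \<in> {1..n-1}"
    hence "G a summable_on UNIV"
      unfolding G_def using power_int_quadratic_summable_on s assms(4) by auto
    thus "Infinite_Set_Sum.abs_summable_on (G a) UNIV"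
      using G_nonneg abs_summable_equivalent[of "G a" UNIV] by simp
  qed auto
  hence dominant: "(\<lambda>k. norm (\<Prod>a\<in>{1..n-1}. G a (k a))) summable_on lattice n"
    by (simp only: abs_summable_equivalent)
  have "norm (theta_term n r \<mu> k) \<le> norm (\<Prod>a\<in>{1..n-1}. G a (k a))" for k
  proof -
    let ?E = "Astar_form n k + (\<Sum>a\<in>{1..n-1}. k a)"
    let ?F = "\<Sum>a\<in>{1..n-1}. k a * k a + k a"
    have "?F \<le> ?E"
      using Astar_form_ge_sum_squares[OF assms(1), of k] by (simp add: sum.distrib)
    moreover have "0 \<le> x * (x + 1)" for x :: int
      by (cases "x \<ge> 0") (auto intro: mult_nonpos_nonpos)
    hence "0 \<le> ?F"
      by (intro sum_nonneg) (simp add: distrib_left)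
    ultimately have "s powi ?E \<le> s powi ?F"
      using s by (intro power_int_decreasing) auto
    hence "norm (theta_term n r \<mu> k) \<le> s powi ?F * (\<Prod>a\<in>{1..n-1}. norm (\<mu> a) powi k a)"
      unfolding theta_term_def s_def
      by (auto simp: norm_mult prod_norm[symmetric] norm_power_int intro!: mult_right_mono prod_nonneg)
    also have "\<dots> = (\<Prod>a\<in>{1..n-1}. G a (k a))"
      using s by (simp add: G_def prod.distrib prod_power_int_eq_power_int_sum)
    also have "\<dots> = norm (\<Prod>a\<in>{1..n-1}. G a (k a))"
      using G_nonneg by (simp add: prod_nonneg)
    finally show ?thesis .
  qed
  hence "(\<lambda>k. norm (theta_term n r \<mu> k)) summable_on lattice n"
    by (intro summable_on_comparison_test[OF dominant]) auto
  thus ?thesis by (rule abs_summable_summable)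
qed

definition period_shift :: "nat \<Rightarrow> complex \<Rightarrow> (nat \<Rightarrow> int) \<Rightarrow> (nat \<Rightarrow> complex) \<Rightarrow> nat \<Rightarrow> complex" where
  "period_shift n r d \<mu> a = r powi (2 * (int n * d a - (\<Sum>b\<in>{1..n-1}. d b))) * \<mu> a"

lemma theta_term_add:
  assumes "r \<noteq> 0" "\<forall>a\<in>{1..n-1}. \<mu> a \<noteq> 0"
  shows "theta_term n r \<mu> (\<lambda>a. k a + d a) = theta_term n r \<mu> d * theta_term n r (period_shift n r d \<mu>) k"
proof -
  define D where "D = (\<Sum>b\<in>{1..n-1}. d b)"
  define B where "B = int n * (\<Sum>a\<in>{1..n-1}. k a * d a) - (\<Sum>a\<in>{1..n-1}. k a) * D"
  have exponent: "Astar_form n (\<lambda>a. k a + d a) + (\<Sum>a\<in>{1..n-1}. k a + d a)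
      = (Astar_form n d + D) + (Astar_form n k + (\<Sum>a\<in>{1..n-1}. k a) + 2 * B)"
    unfolding Astar_form_add B_def D_def by (simp add: sum.distrib)
  have "(\<Prod>a\<in>{1..n-1}. \<mu> a powi (k a + d a))
      = (\<Prod>a\<in>{1..n-1}. \<mu> a powi d a) * (\<Prod>a\<in>{1..n-1}. \<mu> a powi k a)"
    using assms(2) by (simp add: power_int_add prod.distrib mult.commute)
  moreover have "(\<Prod>a\<in>{1..n-1}. period_shift n r d \<mu> a powi k a)
      = r powi (2 * B) * (\<Prod>a\<in>{1..n-1}. \<mu> a powi k a)"
  proof -
    have "(\<Prod>a\<in>{1..n-1}. period_shift n r d \<mu> a powi k a)
        = (\<Prod>a\<in>{1..n-1}. r powi (2 * (int n * d a - D) * k a)) * (\<Prod>a\<in>{1..n-1}. \<mu> a powi k a)"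
      by (simp add: period_shift_def D_def power_int_mult_distrib power_int_mult prod.distrib)
    also have "(\<Sum>a\<in>{1..n-1}. 2 * (int n * d a - D) * k a) = 2 * B"
      by (simp add: B_def sum_subtractf sum_distrib_left sum_distrib_right algebra_simps)
    ultimately show ?thesis by (simp add: prod_power_int_eq_power_int_sum assms(1))
  qed
  ultimately show ?thesis
    unfolding theta_term_def exponent D_def[symmetric] using assms(1)
    by (simp add: power_int_add ac_simps)
qed

lemma theta_term_restrict:
  "theta_term n r \<mu> (restrict k {1..n-1}) = theta_term n r \<mu> k"
  unfolding theta_term_def Astar_form_def
  by (intro arg_cong2[where f = "(*)"] arg_cong2[where f = "(powi)"] arg_cong2[where f = "(+)"]
      sum.cong prod.cong) auto

lemma bij_betw_translate_lattice:
  "bij_betw (\<lambda>k. restrict (\<lambda>a. k a + d a) {1..n-1}) (lattice n) (lattice n)"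
  by (rule bij_betw_byWitness[of _ "\<lambda>k. restrict (\<lambda>a. k a - d a) {1..n-1}"])
     (auto simp: lattice_def PiE_def extensional_def)

lemma Theta1_translate:
  assumes "r \<noteq> 0" "\<forall>a\<in>{1..n-1}. \<mu> a \<noteq> 0"
  shows "Theta1 n r \<mu> = theta_term n r \<mu> d * Theta1 n r (period_shift n r d \<mu>)"
proof -
  have "Theta1 n r \<mu> = (\<Sum>\<^sub>\<infinity>k\<in>lattice n. theta_term n r \<mu> (restrict (\<lambda>a. k a + d a) {1..n-1}))"
    unfolding Theta1_def by (rule infsum_reindex_bij_betw[OF bij_betw_translate_lattice, symmetric])
  also have "\<dots> = theta_term n r \<mu> d * Theta1 n r (period_shift n r d \<mu>)"
    unfolding Theta1_def theta_term_restrict theta_term_add[OF assms] by (rule infsum_cmult_right')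
  finally show ?thesis .
qed

lemma Theta1_cong:
  assumes "\<forall>a\<in>{1..n-1}. \<mu> a = \<nu> a"
  shows "Theta1 n r \<mu> = Theta1 n r \<nu>"
  unfolding Theta1_def theta_term_def using assms by (intro infsum_cong prod.cong refl) auto

lemma theta_term_unit_vector:
  assumes "\<alpha> \<in> {1..n-1}"
  shows "theta_term n r \<mu> (\<lambda>a. of_bool (a = \<alpha>)) = r ^ n * \<mu> \<alpha>"
proof -
  have "Astar_form n (\<lambda>a. of_bool (a = \<alpha>)) + (\<Sum>a\<in>{1..n-1}. of_bool (a = \<alpha>)) = int n"
    using assms by (simp add: Astar_form_altdef sum.delta flip: of_bool_conj)
  moreover have "(\<Prod>a\<in>{1..n-1}. \<mu> a powi of_bool (a = \<alpha>)) = (\<Prod>a\<in>{1..n-1}. if a = \<alpha> then \<mu> a else 1)"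
    by (intro prod.cong) auto
  ultimately show ?thesis using assms by (simp add: theta_term_def prod.delta)
qed

lemma theta_term_minus_ones:
  assumes "n \<ge> 1" "\<forall>a\<in>{1..n-1}. \<mu> a \<noteq> 0"
  shows "theta_term n r \<mu> (\<lambda>_. - 1) = inverse (\<Prod>a\<in>{1..n-1}. \<mu> a)"
proof -
  have "Astar_form n (\<lambda>_. - 1) + (\<Sum>a\<in>{1..n-1}. - 1) = 0"
    using assms(1) by (simp add: Astar_form_altdef of_nat_diff algebra_simps)
  moreover have "(\<Prod>a\<in>{1..n-1}. \<mu> a powi - 1) = inverse (\<Prod>a\<in>{1..n-1}. \<mu> a)"
    using prod_inversef[of \<mu>] by (simp add: o_def)
  ultimately show ?thesis by (simp add: theta_term_def)
qed

lemma Theta1_functional_equation: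
  assumes "n \<ge> 1" "r ^ n = q" "r \<noteq> 0" "\<forall>a\<in>{1..n-1}. \<mu> a \<noteq> 0" "\<alpha> \<in> {1..n}"
  shows "q * mu_ext n q \<mu> \<alpha> * Theta1 n r (nabla q r \<alpha> (mu_ext n q \<mu>)) = Theta1 n r \<mu>"
proof (cases "\<alpha> = n")
  case True
  have "q \<noteq> 0" using assms(2,3) by auto
  let ?d = "\<lambda>_. - 1 :: int"
  have shift: "\<forall>a\<in>{1..n-1}. nabla q r \<alpha> (mu_ext n q \<mu>) a = period_shift n r ?d \<mu> a"
    using True assms(1) by (auto simp: nabla_def mu_ext_def period_shift_def of_nat_diff)
  have factor: "q * mu_ext n q \<mu> \<alpha> = theta_term n r \<mu> ?d"
    using True assms(1,4) \<open>q \<noteq> 0\<close> by (simp add: theta_term_minus_ones mu_ext_def)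
  show ?thesis
    unfolding factor Theta1_cong[OF shift] by (rule Theta1_translate[OF assms(3,4), symmetric])
next
  case False
  let ?d = "\<lambda>a. of_bool (a = \<alpha>) :: int"
  have \<alpha>: "\<alpha> \<in> {1..n-1}" using False assms(5) by auto
  have "r powi (2 * (int n - 1)) = r powi int (n * 2) * r powi - 2"
    by (subst power_int_add[symmetric]) (use assms(3) in \<open>simp_all add: algebra_simps\<close>)
  also have "r powi int (n * 2) = q\<^sup>2"
    unfolding power_int_of_nat using assms(2) by (simp add: power_mult)
  finally have "r powi (2 * (int n - 1)) = q\<^sup>2 * r powi - 2" .
  hence shift: "\<forall>a\<in>{1..n-1}. nabla q r \<alpha> (mu_ext n q \<mu>) a = period_shift n r ?d \<mu> a"
    using False \<alpha> by (auto simp: nabla_def mu_ext_def period_shift_def sum.delta)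
  have factor: "q * mu_ext n q \<mu> \<alpha> = theta_term n r \<mu> ?d"
    using False \<alpha> assms(2) by (simp add: theta_term_unit_vector mu_ext_def)
  show ?thesis
    unfolding factor Theta1_cong[OF shift] by (rule Theta1_translate[OF assms(3,4), symmetric])
qed

lemma prod_mu_ext:
  assumes "n \<ge> 1" "q \<noteq> 0" "\<forall>a\<in>{1..n-1}. \<mu> a \<noteq> 0"
  shows "(\<Prod>b\<in>{1..n}. mu_ext n q \<mu> b) = inverse q"
proof -
  have "{1..n} = insert n {1..n-1}" using assms(1) by auto
  hence "(\<Prod>b\<in>{1..n}. mu_ext n q \<mu> b) = mu_ext n q \<mu> n * (\<Prod>b\<in>{1..n-1}. mu_ext n q \<mu> b)"
    using assms(1) by (simp add: prod.insert)
  also have "(\<Prod>b\<in>{1..n-1}. mu_ext n q \<mu> b) = (\<Prod>a\<in>{1..n-1}. \<mu> a)"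
    by (intro prod.cong) (auto simp: mu_ext_def)
  finally show ?thesis using assms(2,3) by (simp add: mu_ext_def field_simps)
qed

lemma prod_nabla_mu_ext:
  assumes "n \<ge> 1" "r ^ n = q" "r \<noteq> 0" "\<forall>a\<in>{1..n-1}. \<mu> a \<noteq> 0" "\<alpha> \<in> {1..n}"
  shows "(\<Prod>b\<in>{1..n}. nabla q r \<alpha> (mu_ext n q \<mu>) b) = inverse q"
proof -
  have "q \<noteq> 0" using assms(2,3) by auto
  have "(\<Prod>b\<in>{1..n}. nabla q r \<alpha> (mu_ext n q \<mu>) b)
     = (\<Prod>b\<in>{1..n}. if b = \<alpha> then q\<^sup>2 else 1) * (r powi - 2) ^ n * (\<Prod>b\<in>{1..n}. mu_ext n q \<mu> b)"
    by (simp add: nabla_def prod.distrib)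
  also have "(r powi - 2) ^ n = inverse (q\<^sup>2)"
    using assms(2) by (simp add: power_int_minus power_inverse flip: power_mult power_mult_distrib)
      (simp add: power_mult mult.commute)
  finally show ?thesis
    using assms(5) prod_mu_ext[OF assms(1) \<open>q \<noteq> 0\<close> assms(4)] \<open>q \<noteq> 0\<close> by (simp add: prod.delta)
qed

lemma theta_term_eq_exp:
  fixes \<tau> :: complex and z :: "nat \<Rightarrow> complex"
  assumes "n \<ge> 1" "exp (2 * pi * \<i> * \<tau> / of_nat n) = r"
    "\<forall>a\<in>{1..n-1}. r * \<mu> a = exp (2 * pi * \<i> * z a)"
  shows "theta_term n r \<mu> k = exp (pi * \<i> * (\<Sum>a\<in>{1..n-1}. \<Sum>b\<in>{1..n-1}.
                    of_int (k a) * (2 * \<tau> * ((if a = b then 1 else 0) - 1 / of_nat n)) * of_int (k b))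
                 + 2 * pi * \<i> * (\<Sum>a\<in>{1..n-1}. of_int (k a) * z a))"
proof -
  define w where "w = 2 * pi * \<i> * \<tau> / of_nat n"
  have "r \<noteq> 0" using assms(2) by auto
  have "(\<Sum>a\<in>{1..n-1}. \<Sum>b\<in>{1..n-1}.
          of_int (k a) * (2 * \<tau> * ((if a = b then 1 else 0) - 1 / of_nat n)) * of_int (k b))
      = 2 * \<tau> / of_nat n * of_int (Astar_form n k)"
    unfolding Astar_form_def of_int_sum of_int_mult sum_distrib_left
    by (intro sum.cong refl) (use assms(1) in \<open>auto simp: field_simps\<close>)
  moreover have "pi * \<i> * (2 * \<tau> / of_nat n * of_int (Astar_form n k)) = of_int (Astar_form n k) * w"
    by (simp add: w_def field_simps)
  moreover have "2 * pi * \<i> * (\<Sum>a\<in>{1..n-1}. of_int (k a) * z a)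
      = (\<Sum>a\<in>{1..n-1}. of_int (k a) * (2 * pi * \<i> * z a))"
    by (simp add: sum_distrib_left ac_simps)
  moreover have "exp (of_int (Astar_form n k) * w) = r powi Astar_form n k"
    using assms(2) exp_power_int[of w "Astar_form n k"] by (simp add: w_def)
  moreover have "(\<Prod>a\<in>{1..n-1}. exp (of_int (k a) * (2 * pi * \<i> * z a)))
      = r powi (\<Sum>a\<in>{1..n-1}. k a) * (\<Prod>a\<in>{1..n-1}. \<mu> a powi k a)"
  proof -
    have "(\<Prod>a\<in>{1..n-1}. exp (of_int (k a) * (2 * pi * \<i> * z a))) = (\<Prod>a\<in>{1..n-1}. (r * \<mu> a) powi k a)"
      using assms(3) by (intro prod.cong refl) (simp add: exp_power_int[symmetric])
    thus ?thesis
      by (simp add: power_int_mult_distrib prod.distrib prod_power_int_eq_power_int_sum \<open>r \<noteq> 0\<close>)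
  qed
  ultimately show ?thesis
    unfolding theta_term_def by (simp add: exp_add exp_sum power_int_add \<open>r \<noteq> 0\<close> mult.assoc)
qed

lemma Theta1_eq_riemann_theta_series:
  fixes \<tau> :: complex and z :: "nat \<Rightarrow> complex"
  assumes "n \<ge> 1" "exp (2 * pi * \<i> * \<tau> / of_nat n) = r"
    "\<forall>a\<in>{1..n-1}. r * \<mu> a = exp (2 * pi * \<i> * z a)"
  shows "Theta1 n r \<mu> = (\<Sum>\<^sub>\<infinity>k\<in>lattice n.
              exp (pi * \<i> * (\<Sum>a\<in>{1..n-1}. \<Sum>b\<in>{1..n-1}.
                    of_int (k a) * (2 * \<tau> * ((if a = b then 1 else 0) - 1 / of_nat n)) * of_int (k b))
                 + 2 * pi * \<i> * (\<Sum>a\<in>{1..n-1}. of_int (k a) * z a)))"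
  unfolding Theta1_def using assms by (intro infsum_cong theta_term_eq_exp) auto

theorem mainTheorem13:
  fixes n :: nat and q r :: complex and \<mu> :: "nat \<Rightarrow> complex"
  assumes "n \<ge> 2" and "0 < norm q" and "norm q < 1" and "r ^ n = q"
    and "\<forall>a\<in>{1..n-1}. \<mu> a \<noteq> 0"
  shows "theta_term n r \<mu> summable_on lattice n
    \<and> (\<forall>\<alpha>\<in>{1..n}.
          (\<Prod>b\<in>{1..n}. nabla q r \<alpha> (mu_ext n q \<mu>) b) = inverse q
        \<and> q * mu_ext n q \<mu> \<alpha> * Theta1 n r (nabla q r \<alpha> (mu_ext n q \<mu>)) = Theta1 n r \<mu>)
    \<and> (\<forall>\<tau> z. exp (2 * pi * \<i> * \<tau>) = q \<and> exp (2 * pi * \<i> * \<tau> / of_nat n) = r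
          \<and> (\<forall>a\<in>{1..n-1}. r * \<mu> a = exp (2 * pi * \<i> * z a))
        \<longrightarrow> Theta1 n r \<mu> = (\<Sum>\<^sub>\<infinity>k\<in>lattice n.
              exp (pi * \<i> * (\<Sum>a\<in>{1..n-1}. \<Sum>b\<in>{1..n-1}.
                    of_int (k a) * (2 * \<tau> * ((if a = b then 1 else 0) - 1 / of_nat n)) * of_int (k b))
                 + 2 * pi * \<i> * (\<Sum>a\<in>{1..n-1}. of_int (k a) * z a))))"
proof -
  have "n \<ge> 1" "r \<noteq> 0" using assms(1,2,4) by auto
  have "norm r ^ n < 1 ^ n" using assms(3,4) by (simp flip: norm_power)
  hence "norm r < 1" by (rule power_less_imp_less_base) simp
  show ?thesis
    using theta_term_summable_on[OF \<open>n \<ge> 1\<close> _ \<open>norm r < 1\<close> assms(5)]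
      prod_nabla_mu_ext[OF \<open>n \<ge> 1\<close> assms(4) \<open>r \<noteq> 0\<close> assms(5)]
      Theta1_functional_equation[OF \<open>n \<ge> 1\<close> assms(4) \<open>r \<noteq> 0\<close> assms(5)]
      Theta1_eq_riemann_theta_series[OF \<open>n \<ge> 1\<close>] \<open>r \<noteq> 0\<close>
    by auto
qed

end
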